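(* For a topological space $X$ the following are equivalent: (1) $X$ is an Alster space; (2) $X$ satisfies ${\sf S}_1(\mathcal{G}_K,\mathcal{G})$; (3) ${\sf S}_1(\mathcal{G}_K,\mathcal{G}_\Omega)$; (4) ${\sf S}_1(\mathcal{G}_K,\mathcal{G}^{gp})$; (5) ${\sf S}_1(\mathcal{G}_K,\mathcal{G}_\Omega^{gp})$; (6) ${\sf S}_{fin}(\mathcal{G}_K,\mathcal{G})$; (7) ${\sf S}_{fin}(\mathcal{G}_K,\mathcal{G}^{gp})$; (8) ${\sf S}_{fin}(\mathcal{G}_K,\mathcal{G}_\Omega^{gp})$.
   Context: All spaces are infinite ${\sf T}_1$ topological spaces. $\mathcal{G}_K$ is the family of all collections $\mathcal{U}$ of ${\sf G}_\delta$ subsets of $X$ with $X\notin\mathcal{U}$ such that each compact subset of $X$ is contained in some member of $\mathcal{U}$. $\mathcal{G}$ is the family of all covers of $X$ by ${\sf G}_\delta$ sets. $\mathcal{G}_\Omega$ is the family of $\mathcal{U}\in\mathcal{G}$ with $X\notin\mathcal{U}$ such that every finite subset of $X$ is contained in some member of $\mathcal{U}$. $\mathcal{G}^{gp}$ is the family of $\mathcal{U}\in\mathcal{G}$ admitting a partition $\mathcal{U}=\bigcup_{n\in\mathbb{N}}\mathcal{U}_n$ into pairwise disjoint finite sets such that each $x\in X$ lies in $\bigcup\mathcal{U}_n$ for all but finitely many $n$; $\mathcal{G}_\Omega^{gp}=\mathcal{G}_\Omega\cap\mathcal{G}^{gp}$. $X$ is an Alster space if every member of $\mathcal{G}_K$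 has a countable subfamily covering $X$. ${\sf S}_1(\mathcal{A},\mathcal{B})$: for each sequence $(A_n)$ of elements of $\mathcal{A}$ there are $B_n\in A_n$ with $\{B_n:n\in\mathbb{N}\}\in\mathcal{B}$. ${\sf S}_{fin}(\mathcal{A},\mathcal{B})$: for each sequence $(A_n)$ of elements of $\mathcal{A}$ there are finite $B_n\subseteq A_n$ with $\bigcup_n B_n\in\mathcal{B}$. *)

theory Defs
  imports "HOL-Analysis.Analysis"
begin

definition GK :: "'a topology \<Rightarrow> 'a set set set" where
  "GK X = {U. (\<forall>G\<in>U. gdelta_in X G) \<and> topspace X \<notin> U \<and>
              (\<forall>K. compactin X K \<longrightarrow> (\<exists>G\<in>U. K \<subseteq> G))}"

definition GCov :: "'a topology \<Rightarrow> 'a set set set" where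
  "GCov X = {U. (\<forall>G\<in>U. gdelta_in X G) \<and> \<Union>U = topspace X}"

definition GOmega :: "'a topology \<Rightarrow> 'a set set set" where
  "GOmega X = {U \<in> GCov X. topspace X \<notin> U \<and>
              (\<forall>F. finite F \<and> F \<subseteq> topspace X \<longrightarrow> (\<exists>G\<in>U. F \<subseteq> G))}"

definition Ggp :: "'a topology \<Rightarrow> 'a set set set" where
  "Ggp X = {U \<in> GCov X. \<exists>P :: nat \<Rightarrow> 'a set set.
              (\<forall>n. finite (P n)) \<and> disjoint_family P \<and> U = (\<Union>n. P n) \<and>
              (\<forall>x\<in>topspace X. \<forall>\<^sub>F n in sequentially. x \<in> \<Union>(P n))}"

definition GOmega_gp :: "'a topology \<Rightarrow> 'a set set set" where
  "GOmega_gp X = GOmega X \<inter> Ggp X"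

definition Alster :: "'a topology \<Rightarrow> bool" where
  "Alster X \<longleftrightarrow> (\<forall>U\<in>GK X. \<exists>V. V \<subseteq> U \<and> countable V \<and> topspace X \<subseteq> \<Union>V)"

definition S1 :: "'b set set set \<Rightarrow> 'b set set set \<Rightarrow> bool" where
  "S1 A B \<longleftrightarrow> (\<forall>S :: nat \<Rightarrow> 'b set set. (\<forall>n. S n \<in> A) \<longrightarrow>
      (\<exists>b :: nat \<Rightarrow> 'b set. (\<forall>n. b n \<in> S n) \<and> range b \<in> B))"

definition Sfin :: "'b set set set \<Rightarrow> 'b set set set \<Rightarrow> bool" where
  "Sfin A B \<longleftrightarrow> (\<forall>S :: nat \<Rightarrow> 'b set set. (\<forall>n. S n \<in> A) \<longrightarrow>
      (\<exists>F :: nat \<Rightarrow> 'b set set. (\<forall>n. finite (F n) \<and> F n \<subseteq> S n) \<and> (\<Union>n. F n) \<in> B))"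

end

theory Submission
  imports Defs
begin

text \<open>
  Given a sequence \<open>U\<^sub>n\<close> in \<open>\<G>\<^sub>K\<close>, one builds countably infinite subfamilies \<open>D\<^sub>n \<subseteq> U\<^sub>n\<close> such that
  every set of at most \<open>r\<close> points lies in every member of \<open>D\<^sub>m\<close> for infinitely many \<open>m\<close>, by
  induction on \<open>r\<close>. In the inductive step one solves the problem for the members of \<open>U\<^sub>n\<close>
  containing a compact set \<open>K\<close>; the intersection \<open>H(K)\<close> of everything selected is a proper
  \<open>G\<^sub>\<delta>\<close> set containing \<open>K\<close>, so by the Alster property countably many \<open>H(K\<^sub>i)\<close> cover \<open>X\<close>,
  and the \<open>i\<close>-th row of the new selection is taken from the solution for \<open>K\<^sub>i\<close>. A point
  of \<open>H(K\<^sub>i)\<close> lies in every set of row \<open>i\<close>, which both adds one point to the size bound and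
  makes an injective selection \<open>G\<^sub>n \<in> D\<^sub>n\<close> groupable along the antidiagonals. Conversely,
  \<open>S\<^sub>f\<^sub>i\<^sub>n(\<G>\<^sub>K, \<G>)\<close> applied to a constant sequence is the Alster property.
\<close>

lemma GK_memberD:
  assumes "U \<in> GK X" "G \<in> U"
  shows "gdelta_in X G" "G \<subseteq> topspace X" "G \<noteq> topspace X"
  using assms gdelta_in_subset unfolding GK_def by auto

lemma GK_imp_infinite:
  assumes "U \<in> GK X" shows "infinite U"
proof
  assume fin: "finite U"
  have "\<exists>x. x \<in> topspace X \<and> x \<notin> G" if "G \<in> U" for G
    using GK_memberD[OF assms that] by blast
  then obtain p where p: "\<forall>G\<in>U. p G \<in> topspace X \<and> p G \<notin> G" by metis
  have "compactin X (p ` U)" using p fin by (intro finite_imp_compactin) auto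
  then obtain G where "G \<in> U" "p ` U \<subseteq> G" using assms unfolding GK_def by blast
  then show False using p by blast
qed

lemma GK_restrict:
  assumes "U \<in> GK X" "compactin X K" shows "{G \<in> U. K \<subseteq> G} \<in> GK X"
proof -
  have "\<exists>G\<in>{G \<in> U. K \<subseteq> G}. L \<subseteq> G" if "compactin X L" for L
  proof -
    have "compactin X (K \<union> L)" using assms(2) that by (rule compactin_Un)
    then show ?thesis using assms(1) unfolding GK_def by blast
  qed
  then show ?thesis using assms(1) unfolding GK_def by auto
qed

lemma inj_choice_from_infinite:
  fixes D :: "nat \<Rightarrow> 'b set"
  assumes "\<And>n. infinite (D n)"
  obtains b where "inj b" "\<And>n. b n \<in> D n"
proof -
  have "\<exists>b. \<forall>n. b n \<in> D n \<and> b n \<notin> b ` {..<n}"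
  proof (rule dependent_wellorder_choice)
    fix n and b :: "nat \<Rightarrow> 'b"
    have "infinite (D n - b ` {..<n})" using assms by simp
    then show "\<exists>G. G \<in> D n \<and> G \<notin> b ` {..<n}" by (metis Diff_iff finite.emptyI ex_in_conv)
  qed (metis (no_types) image_cong lessThan_iff)
  then obtain b where b: "\<And>n. b n \<in> D n \<and> b n \<notin> b ` {..<n}" by blast
  have "inj b" by (rule linorder_injI) (metis b imageI lessThan_iff)
  with b show thesis using that by blast
qed

definition row :: "(nat \<Rightarrow> 'b) \<Rightarrow> nat \<Rightarrow> nat \<Rightarrow> 'b" where
  "row D i m = D (prod_encode (i, m))"

definition glue :: "(nat \<Rightarrow> nat \<Rightarrow> 'b) \<Rightarrow> nat \<Rightarrow> 'b" where
  "glue R n = case_prod R (prod_decode n)"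

lemma row_glue [simp]: "row (glue R) i = R i"
  by (simp add: row_def glue_def fun_eq_iff)

lemma infinite_row_indices:
  assumes "infinite {m. P (prod_encode (i, m))}" shows "infinite {n. P n}"
proof -
  have "inj (\<lambda>m. prod_encode (i, m))" by (simp add: inj_on_def prod_encode_eq)
  then have "infinite ((\<lambda>m. prod_encode (i, m)) ` {m. P (prod_encode (i, m))})"
    using assms by (simp add: finite_image_iff inj_on_subset)
  then show ?thesis by (rule infinite_super[rotated]) blast
qed

definition subfamilies :: "(nat \<Rightarrow> 'a set set) \<Rightarrow> (nat \<Rightarrow> 'a set set) \<Rightarrow> bool" where
  "subfamilies U D \<longleftrightarrow> (\<forall>n. D n \<subseteq> U n \<and> countable (D n) \<and> infinite (D n))"

lemma subfamilies_row: "subfamilies U D \<Longrightarrow> subfamilies (row U i) (row D i)"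
  by (simp add: subfamilies_def row_def)

lemma subfamilies_mono: "subfamilies U D \<Longrightarrow> (\<And>n. U n \<subseteq> U' n) \<Longrightarrow> subfamilies U' D"
  unfolding subfamilies_def by blast

lemma subfamilies_glue:
  assumes "\<And>i. subfamilies (row U i) (R i)" shows "subfamilies U (glue R)"
  unfolding subfamilies_def
proof
  fix n
  obtain i m where n: "n = prod_encode (i, m)" by (metis prod_decode_inverse surj_pair)
  then have "glue R n = R i m" "U n = row U i m" by (simp_all add: glue_def row_def)
  with assms[of i] show "glue R n \<subseteq> U n \<and> countable (glue R n) \<and> infinite (glue R n)"
    unfolding subfamilies_def by simp
qed

lemma subfamilies_rowwise:
  assumes "\<And>i. \<exists>D. subfamilies (row U i) D \<and> Q i D"
  shows "\<exists>D. subfamilies U D \<and> (\<forall>i. Q i (row D i))"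
proof -
  from assms obtain R where "\<And>i. subfamilies (row U i) (R i) \<and> Q i (R i)" by metis
  then show ?thesis by (auto intro!: exI[of _ "glue R"] subfamilies_glue)
qed

lemma GK_subfamilies_exist:
  assumes "\<forall>n. U n \<in> GK X" shows "\<exists>D. subfamilies U D"
proof -
  have "\<forall>n. \<exists>C. C \<subseteq> U n \<and> countable C \<and> infinite C"
  proof
    fix n
    have "infinite (U n)" using assms GK_imp_infinite by blast
    then show "\<exists>C. C \<subseteq> U n \<and> countable C \<and> infinite C" by (rule infinite_countable_subset')
  qed
  then show ?thesis unfolding subfamilies_def by (rule choice)
qed

lemma gdelta_Inter_subfamilies:
  assumes "\<forall>n. U n \<in> GK X" "subfamilies U D"
  shows "gdelta_in X (\<Inter>(\<Union>n. D n))" "\<Inter>(\<Union>n. D n) \<noteq> topspace X"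
proof -
  have members: "gdelta_in X G \<and> G \<subseteq> topspace X \<and> G \<noteq> topspace X" if "G \<in> D n" for G n
  proof -
    have "G \<in> U n" using that assms(2) unfolding subfamilies_def by blast
    then show ?thesis using GK_memberD[of "U n" X G] assms(1) by blast
  qed
  have "infinite (D 0)" using assms(2) unfolding subfamilies_def by blast
  then obtain G where G: "G \<in> D 0" by (metis finite.emptyI ex_in_conv)
  have "countable (\<Union>n. D n)" using assms(2) unfolding subfamilies_def by (intro countable_UN) auto
  with G members show "gdelta_in X (\<Inter>(\<Union>n. D n))" by (intro gdelta_in_Inter) auto
  have "\<Inter>(\<Union>n. D n) \<subseteq> G" using G by blast
  with members[OF G] show "\<Inter>(\<Union>n. D n) \<noteq> topspace X" by (metis order.trans subset_antisym)
qed

lemma Alster_cover_by_compact_hulls: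
  fixes X :: "'a topology"
  assumes "Alster X" "topspace X \<noteq> {}"
    and H: "\<And>K. compactin X K \<Longrightarrow> gdelta_in X (H K) \<and> K \<subseteq> H K \<and> H K \<noteq> topspace X"
  obtains K :: "nat \<Rightarrow> 'a set" where "\<And>i. compactin X (K i)" "topspace X \<subseteq> (\<Union>i. H (K i))"
proof -
  have "topspace X \<notin> H ` {K. compactin X K}" using H by force
  moreover have "\<exists>G\<in>H ` {K. compactin X K}. K \<subseteq> G" if "compactin X K" for K
    using H that by blast
  ultimately have "H ` {K. compactin X K} \<in> GK X" unfolding GK_def using H by blast
  with assms(1) obtain V where V: "V \<subseteq> H ` {K. compactin X K}" "countable V" "topspace X \<subseteq> \<Union>V"
    unfolding Alster_def by auto
  have "V \<noteq> {}" using V(3) assms(2) by (metis Union_empty subset_empty)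
  have "\<exists>K. compactin X K \<and> from_nat_into V i = H K" for i
    using V(1) from_nat_into[OF \<open>V \<noteq> {}\<close>] by blast
  then obtain K where K: "\<And>i. compactin X (K i)" "\<And>i. from_nat_into V i = H (K i)" by metis
  have "(\<Union>i. H (K i)) = \<Union>V"
    using range_from_nat_into[OF \<open>V \<noteq> {}\<close> V(2)] K(2) by (metis image_cong)
  with V(3) show thesis by (intro that[of K] K(1)) simp
qed

lemma GK_rowwise_above_compact:
  assumes Q: "\<And>W. \<forall>n. W n \<in> GK X \<Longrightarrow> \<exists>D. subfamilies W D \<and> Q D"
    and U: "\<forall>n. U n \<in> GK X" and K: "compactin X K"
  obtains E where "subfamilies U E" "\<And>i. Q (row E i)" "K \<subseteq> \<Inter>(\<Union>n. E n)"
proof -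
  define UK where "UK n = {G \<in> U n. K \<subseteq> G}" for n
  have "\<exists>D. subfamilies (row UK i) D \<and> Q D" for i
  proof -
    have "\<forall>m. row UK i m \<in> GK X" using U K GK_restrict unfolding UK_def row_def by blast
    then show ?thesis by (rule Q)
  qed
  then obtain E where E: "subfamilies UK E" "\<And>i. Q (row E i)"
    using subfamilies_rowwise[of UK "\<lambda>_. Q"] by blast
  have "subfamilies U E" using E(1) by (rule subfamilies_mono) (simp add: UK_def)
  moreover have "K \<subseteq> \<Inter>(\<Union>n. E n)" using E(1) unfolding subfamilies_def UK_def by blast
  ultimately show thesis using that E(2) by blast
qed

lemma Alster_row_refinement:
  fixes X :: "'a topology"
  assumes "Alster X" "topspace X \<noteq> {}"
    and Q: "\<And>W. \<forall>n. W n \<in> GK X \<Longrightarrow> \<exists>D. subfamilies W D \<and> Q D"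
    and U: "\<forall>n. U n \<in> GK X"
  obtains D A where "subfamilies U D" "topspace X \<subseteq> (\<Union>i. A i)"
    "\<And>i m. A i \<subseteq> \<Inter>(row D i m)" "\<And>i. Q (row D i)"
proof -
  have "\<exists>E. subfamilies U E \<and> (\<forall>i. Q (row E i)) \<and> K \<subseteq> \<Inter>(\<Union>n. E n)" if "compactin X K" for K
    using GK_rowwise_above_compact[OF Q U that] by metis
  then obtain E where E: "\<And>K. compactin X K \<Longrightarrow>
      subfamilies U (E K) \<and> (\<forall>i. Q (row (E K) i)) \<and> K \<subseteq> \<Inter>(\<Union>n. E K n)"
    by metis
  define H where "H K = \<Inter>(\<Union>n. E K n)" for K
  have "gdelta_in X (H K) \<and> K \<subseteq> H K \<and> H K \<noteq> topspace X" if "compactin X K" for K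
    using E[OF that] gdelta_Inter_subfamilies[OF U, of "E K"] unfolding H_def by simp
  then obtain K :: "nat \<Rightarrow> 'a set" where K: "\<And>i. compactin X (K i)" "topspace X \<subseteq> (\<Union>i. H (K i))"
    using Alster_cover_by_compact_hulls[OF assms(1,2)] by metis
  define D where "D = glue (\<lambda>i. row (E (K i)) i)"
  show thesis
  proof (rule that[of D "\<lambda>i. H (K i)"])
    show "subfamilies U D"
      unfolding D_def using E[OF K(1)] by (simp add: subfamilies_glue subfamilies_row)
    show "topspace X \<subseteq> (\<Union>i. H (K i))" by (rule K(2))
    show "H (K i) \<subseteq> \<Inter>(row D i m)" for i m
      unfolding D_def H_def row_glue by (auto simp: row_def)
    show "Q (row D i)" for i
      using E K(1) by (simp add: D_def)
  qed
qed

definition frequent_inside :: "'a topology \<Rightarrow> nat \<Rightarrow> (nat \<Rightarrow> 'a set set) \<Rightarrow> bool" where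
  "frequent_inside X r D \<longleftrightarrow>
    (\<forall>F. finite F \<and> F \<subseteq> topspace X \<and> card F \<le> r \<longrightarrow> infinite {m. F \<subseteq> \<Inter>(D m)})"

lemma frequent_inside_0: "frequent_inside X 0 D"
  unfolding frequent_inside_def
proof (intro allI impI)
  fix F :: "'a set" assume "finite F \<and> F \<subseteq> topspace X \<and> card F \<le> 0"
  then have "F = {}" by (auto simp: card_eq_0_iff)
  then show "infinite {m. F \<subseteq> \<Inter>(D m)}" by simp
qed

lemma frequent_inside_row:
  assumes "frequent_inside X r (row D i)" shows "frequent_inside X r D"
  unfolding frequent_inside_def
proof (intro allI impI)
  fix F assume "finite F \<and> F \<subseteq> topspace X \<and> card F \<le> r"
  with assms have "infinite {m. F \<subseteq> \<Inter>(D (prod_encode (i, m)))}"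
    unfolding frequent_inside_def row_def by blast
  then show "infinite {m. F \<subseteq> \<Inter>(D m)}" by (rule infinite_row_indices)
qed

lemma frequent_inside_Suc:
  assumes "topspace X \<subseteq> (\<Union>i. A i)" "\<And>i m. A i \<subseteq> \<Inter>(row D i m)"
    and "\<And>i. frequent_inside X r (row D i)"
  shows "frequent_inside X (Suc r) D"
  unfolding frequent_inside_def
proof (intro allI impI)
  fix F assume F: "finite F \<and> F \<subseteq> topspace X \<and> card F \<le> Suc r"
  show "infinite {m. F \<subseteq> \<Inter>(D m)}"
  proof (cases "F = {}")
    case True
    then show ?thesis by simp
  next
    case False
    then obtain x where x: "x \<in> F" by blast
    with F assms(1) obtain i where "x \<in> A i" by blast
    from F x have "card (F - {x}) \<le> r" by (auto simp: card_Diff_singleton)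
    have "{m. F - {x} \<subseteq> \<Inter>(row D i m)} \<subseteq> {m. F \<subseteq> \<Inter>(D (prod_encode (i, m)))}"
      using \<open>x \<in> A i\<close> assms(2)[of i] x unfolding row_def by blast
    moreover have "infinite {m. F - {x} \<subseteq> \<Inter>(row D i m)}"
      using F assms(3)[of i] \<open>card (F - {x}) \<le> r\<close> unfolding frequent_inside_def by blast
    ultimately have "infinite {m. F \<subseteq> \<Inter>(D (prod_encode (i, m)))}" by (rule infinite_super)
    then show ?thesis by (rule infinite_row_indices)
  qed
qed

lemma Alster_frequent_inside:
  fixes X :: "'a topology"
  assumes "Alster X" "topspace X \<noteq> {}"
  shows "\<forall>n. U n \<in> GK X \<Longrightarrow> \<exists>D. subfamilies U D \<and> frequent_inside X r D"
proof (induction r arbitrary: U)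
  case 0
  then show ?case using GK_subfamilies_exist frequent_inside_0 by blast
next
  case (Suc r)
  obtain D A where "subfamilies U D" "topspace X \<subseteq> (\<Union>i. A i)"
    "\<And>i m. A i \<subseteq> \<Inter>(row D i m)" "\<And>i. frequent_inside X r (row D i)"
    using Alster_row_refinement[OF assms Suc.IH Suc.prems] by metis
  then show ?case using frequent_inside_Suc by blast
qed

lemma Alster_frequent_inside_all:
  fixes X :: "'a topology"
  assumes "Alster X" "topspace X \<noteq> {}" "\<forall>n. U n \<in> GK X"
  shows "\<exists>D. subfamilies U D \<and> (\<forall>r. frequent_inside X r D)"
proof -
  have "\<exists>D. subfamilies (row U r) D \<and> frequent_inside X r D" for r
  proof -
    have "\<forall>m. row U r m \<in> GK X" using assms(3) by (simp add: row_def)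
    then show ?thesis by (rule Alster_frequent_inside[OF assms(1,2)])
  qed
  then obtain D where "subfamilies U D" "\<And>r. frequent_inside X r (row D r)"
    using subfamilies_rowwise[of U "frequent_inside X"] by blast
  then show ?thesis using frequent_inside_row by blast
qed

lemma range_in_GOmega:
  assumes "range b \<in> GCov X" "topspace X \<notin> range b"
    and "\<And>n. b n \<in> D n" "\<And>r. frequent_inside X r D"
  shows "range b \<in> GOmega X"
  unfolding GOmega_def
proof (intro CollectI conjI allI impI)
  fix F assume F: "finite F \<and> F \<subseteq> topspace X"
  then have "infinite {m. F \<subseteq> \<Inter>(D m)}"
    using assms(4)[of "card F"] unfolding frequent_inside_def by blast
  then obtain m where "F \<subseteq> \<Inter>(D m)" by (metis (mono_tags) empty_Collect_eq finite.emptyI)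
  then show "\<exists>G\<in>range b. F \<subseteq> G" using assms(3)[of m] by blast
qed (use assms in auto)

lemma range_in_Ggp:
  assumes "inj b" "range b \<in> GCov X"
    and rows: "\<And>x. x \<in> topspace X \<Longrightarrow> \<exists>i. \<forall>m. x \<in> b (prod_encode (i, m))"
  shows "range b \<in> Ggp X"
proof -
  define diag where "diag k = (\<lambda>i. prod_encode (i, k - i)) ` {..k}" for k
  have "disjoint_family diag"
    unfolding disjoint_family_on_def diag_def by (auto simp: prod_encode_eq)
  then have "disjoint_family (\<lambda>k. b ` diag k)"
    using assms(1) by (simp add: disjoint_family_on_def image_Int[symmetric])
  moreover have "range b = (\<Union>k. b ` diag k)"
  proof -
    have "prod_encode (i, m) \<in> diag (i + m)" for i m
      unfolding diag_def by force
    then have "\<exists>k. n \<in> diag k" for n by (metis prod_decode_inverse surj_pair)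
    then show ?thesis by blast
  qed
  moreover have "\<forall>\<^sub>F k in sequentially. x \<in> \<Union>(b ` diag k)" if x: "x \<in> topspace X" for x
  proof -
    obtain i where "\<forall>m. x \<in> b (prod_encode (i, m))" using rows[OF x] by blast
    then have "x \<in> \<Union>(b ` diag k)" if "i \<le> k" for k
      using that unfolding diag_def by fastforce
    then show ?thesis unfolding eventually_sequentially by blast
  qed
  moreover have "finite (b ` diag k)" for k by (simp add: diag_def)
  ultimately show ?thesis
    using assms(2) unfolding Ggp_def by (intro CollectI conjI exI[of _ "\<lambda>k. b ` diag k"]) auto
qed

lemma Alster_imp_S1_GK_GOmega_gp:
  fixes X :: "'a topology"
  assumes "Alster X" "topspace X \<noteq> {}"
  shows "S1 (GK X) (GOmega_gp X)"
  unfolding S1_def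
proof (intro allI impI)
  fix U :: "nat \<Rightarrow> 'a set set" assume U: "\<forall>n. U n \<in> GK X"
  obtain D A where D: "subfamilies U D" and A: "topspace X \<subseteq> (\<Union>i. A i)" "\<And>i m. A i \<subseteq> \<Inter>(row D i m)"
    and freq: "\<And>i. \<forall>r. frequent_inside X r (row D i)"
    using Alster_row_refinement[OF assms Alster_frequent_inside_all[OF assms] U] by metis
  \<comment> \<open>injectivity keeps the images of the disjoint antidiagonals disjoint\<close>
  obtain b where b: "inj b" "\<And>n. b n \<in> D n"
    using inj_choice_from_infinite D unfolding subfamilies_def by metis
  have bU: "b n \<in> U n" for n using b(2) D unfolding subfamilies_def by blast
  have rows: "\<exists>i. \<forall>m. x \<in> b (prod_encode (i, m))" if x: "x \<in> topspace X" for x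
  proof -
    obtain i where "x \<in> A i" using A(1) x by blast
    then show ?thesis using A(2)[of i] b(2) unfolding row_def by blast
  qed
  have "\<Union>(range b) = topspace X"
  proof
    show "\<Union>(range b) \<subseteq> topspace X" using GK_memberD(2)[OF U[rule_format] bU] by blast
    show "topspace X \<subseteq> \<Union>(range b)" using rows by blast
  qed
  then have GCov: "range b \<in> GCov X"
    unfolding GCov_def using GK_memberD(1)[OF U[rule_format] bU] by auto
  have "topspace X \<notin> range b"
    using GK_memberD(3)[OF U[rule_format] bU] by (metis rangeE)
  moreover have "frequent_inside X r D" for r
    using freq frequent_inside_row by blast
  ultimately have "range b \<in> GOmega X" "range b \<in> Ggp X"
    using range_in_GOmega[OF GCov _ b(2)] range_in_Ggp[OF b(1) GCov rows] by blast+
  then show "\<exists>b. (\<forall>n. b n \<in> U n) \<and> range b \<in> GOmega_gp X"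
    using bU unfolding GOmega_gp_def by blast
qed

lemma S1_mono: "S1 A B \<Longrightarrow> B \<subseteq> C \<Longrightarrow> S1 A C"
  unfolding S1_def by blast

lemma Sfin_mono: "Sfin A B \<Longrightarrow> B \<subseteq> C \<Longrightarrow> Sfin A C"
  unfolding Sfin_def by blast

lemma S1_imp_Sfin:
  assumes "S1 A B" shows "Sfin A B"
  unfolding Sfin_def
proof (intro allI impI)
  fix S :: "nat \<Rightarrow> 'a set set" assume "\<forall>n. S n \<in> A"
  with spec[OF assms[unfolded S1_def], of S]
  obtain b where "\<forall>n. b n \<in> S n" "range b \<in> B" by blast
  moreover have "(\<Union>n. {b n}) = range b" by auto
  ultimately show "\<exists>F. (\<forall>n. finite (F n) \<and> F n \<subseteq> S n) \<and> (\<Union>n. F n) \<in> B"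
    by (intro exI[of _ "\<lambda>n. {b n}"]) simp
qed

lemma Sfin_GK_GCov_imp_Alster:
  assumes "Sfin (GK X) (GCov X)" shows "Alster X"
  unfolding Alster_def
proof
  fix U assume "U \<in> GK X"
  with assms[unfolded Sfin_def, rule_format, of "\<lambda>_. U"]
  obtain F :: "nat \<Rightarrow> 'a set set"
    where F: "\<forall>n. finite (F n) \<and> F n \<subseteq> U" "(\<Union>n. F n) \<in> GCov X"
    by blast
  have "countable (\<Union>n. F n)" using F(1) by (intro countable_UN) (auto intro: countable_finite)
  moreover have "(\<Union>n. F n) \<subseteq> U" using F(1) by blast
  moreover have "topspace X \<subseteq> \<Union>(\<Union>n. F n)" using F(2) unfolding GCov_def by blast
  ultimately show "\<exists>V\<subseteq>U. countable V \<and> topspace X \<subseteq> \<Union>V" by blast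
qed

theorem theorem4p6:
  fixes X :: "'a topology"
  assumes "t1_space X" and "infinite (topspace X)"
  shows "(Alster X \<longleftrightarrow> S1 (GK X) (GCov X))
       \<and> (Alster X \<longleftrightarrow> S1 (GK X) (GOmega X))
       \<and> (Alster X \<longleftrightarrow> S1 (GK X) (Ggp X))
       \<and> (Alster X \<longleftrightarrow> S1 (GK X) (GOmega_gp X))
       \<and> (Alster X \<longleftrightarrow> Sfin (GK X) (GCov X))
       \<and> (Alster X \<longleftrightarrow> Sfin (GK X) (Ggp X))
       \<and> (Alster X \<longleftrightarrow> Sfin (GK X) (GOmega_gp X))"
proof -
  have "topspace X \<noteq> {}" using assms(2) by auto
  then have strongest: "Alster X \<Longrightarrow> S1 (GK X) (GOmega_gp X)"
    using Alster_imp_S1_GK_GOmega_gp by blast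
  have S1_iff: "Alster X \<longleftrightarrow> S1 (GK X) B" if "GOmega_gp X \<subseteq> B" "B \<subseteq> GCov X" for B
    using strongest S1_mono S1_imp_Sfin Sfin_mono Sfin_GK_GCov_imp_Alster that by metis
  have Sfin_iff: "Alster X \<longleftrightarrow> Sfin (GK X) B" if "GOmega_gp X \<subseteq> B" "B \<subseteq> GCov X" for B
    using strongest S1_mono S1_imp_Sfin Sfin_mono Sfin_GK_GCov_imp_Alster that by metis
  have "GOmega_gp X \<subseteq> GOmega X" "GOmega_gp X \<subseteq> Ggp X" "GOmega X \<subseteq> GCov X" "Ggp X \<subseteq> GCov X"
    unfolding GOmega_gp_def GOmega_def Ggp_def by auto
  then show ?thesis using S1_iff Sfin_iff by (meson order.refl order.trans)
qed

end
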